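(* Let $n\ge 2$ and let $S$ be an admissible peak set in $S^B_n$. Then $\max\{d_H(\sigma,\rho) : \sigma,\rho\in P^B(S;n)\}=n$.
   Context: $S^B_n$ is the set of bijections $\sigma$ of $\{-n,\dots,-1,1,\dots,n\}$ with $\sigma(-i)=-\sigma(i)$ for all $i$; a signed permutation is written in one-line notation $\sigma(1)\cdots\sigma(n)$. A signed permutation $\sigma$ has a peak at index $i\in\{2,\dots,n-1\}$ if $\sigma(i-1)<\sigma(i)>\sigma(i+1)$ (usual order on integers). $Peak(\sigma)$ is the set of indices where $\sigma$ has a peak, and for $S\subseteq[n]$, $P^B(S;n)=\{\sigma\in S^B_n : Peak(\sigma)=S\}$. $S$ is an admissible peak set if $P^B(S;n)\neq\emptyset$ (equivalently, $S\subseteq\{2,\dots,n-1\}$ and $S$ contains no two consecutive integers). The Hamming metric is $d_H(\sigma,\rho)=|\{i\in[n] : \sigma(i)\neq\rho(i)\}|$. *)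

theory Defs
  imports Main
begin

text \<open>Signed permutations of {-n..-1,1..n}, represented as functions int => int
  that are the identity outside this domain.\<close>

definition signed_dom :: "nat \<Rightarrow> int set" where
  "signed_dom n = {i. 1 \<le> \<bar>i\<bar> \<and> \<bar>i\<bar> \<le> int n}"

definition signed_perms :: "nat \<Rightarrow> (int \<Rightarrow> int) set" where
  "signed_perms n = {\<sigma>. bij_betw \<sigma> (signed_dom n) (signed_dom n)
      \<and> (\<forall>i\<in>signed_dom n. \<sigma> (- i) = - \<sigma> i)
      \<and> (\<forall>i. i \<notin> signed_dom n \<longrightarrow> \<sigma> i = i)}"

definition peak_set :: "nat \<Rightarrow> (int \<Rightarrow> int) \<Rightarrow> nat set" where
  "peak_set n \<sigma> = {i. 2 \<le> i \<and> i \<le> n - 1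
      \<and> \<sigma> (int i - 1) < \<sigma> (int i) \<and> \<sigma> (int i) > \<sigma> (int i + 1)}"

definition PB :: "nat set \<Rightarrow> nat \<Rightarrow> (int \<Rightarrow> int) set" where
  "PB S n = {\<sigma> \<in> signed_perms n. peak_set n \<sigma> = S}"

definition admissible_peak_set :: "nat set \<Rightarrow> nat \<Rightarrow> bool" where
  "admissible_peak_set S n \<longleftrightarrow> PB S n \<noteq> {}"

definition hamming :: "nat \<Rightarrow> (int \<Rightarrow> int) \<Rightarrow> (int \<Rightarrow> int) \<Rightarrow> nat" where
  "hamming n \<sigma> \<rho> = card {i \<in> {1..n}. \<sigma> (int i) \<noteq> \<rho> (int i)}"

end

theory Submission
  imports Defs
begin

text \<open>Take \<sigma> with peak set S and let V be the set of values \<sigma>(1), ..., \<sigma>(n). Since \<sigma> is a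
  signed permutation, V and -V are disjoint sets of the same size. Replacing each value \<sigma>(i)
  by the element of -V of the same rank yields a signed permutation \<rho> whose values at the
  positions 1, ..., n are in the same relative order as those of \<sigma>, so \<rho> has the same peaks;
  and \<rho>(i) lies in -V while \<sigma>(i) lies in V, so \<sigma> and \<rho> differ at every position.\<close>

lemma ex_strict_mono_on_into:
  fixes V :: "'a::linorder set" and W :: "'b::linorder set"
  assumes "finite V" "finite W" "card V = card W"
  obtains f where "f ` V \<subseteq> W" "strict_mono_on V f"
proof
  define ys where "ys = sorted_list_of_set W"
  define rank where "rank v = card {u \<in> V. u < v}" for v
  have ys: "length ys = card W" "sorted_wrt (<) ys" "set ys = W"
    using assms(2) by (simp_all add: ys_def)
  have rank_less: "rank v < card W" if "v \<in> V" for v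
  proof -
    have "{u \<in> V. u < v} \<subset> V" using that by auto
    then have "rank v < card V" unfolding rank_def by (rule psubset_card_mono[OF assms(1)])
    with assms(3) show ?thesis by simp
  qed
  have rank_mono: "rank v < rank v'" if "v \<in> V" "v' \<in> V" "v < v'" for v v'
  proof -
    have "{u \<in> V. u < v} \<subset> {u \<in> V. u < v'}" using that by auto
    moreover have "finite {u \<in> V. u < v'}" using assms(1) by simp
    ultimately show ?thesis unfolding rank_def by (simp add: psubset_card_mono)
  qed
  show "(\<lambda>v. ys ! rank v) ` V \<subseteq> W"
  proof (rule image_subsetI)
    fix v assume "v \<in> V"
    then have "rank v < length ys" using rank_less ys(1) by simp
    then show "ys ! rank v \<in> W" using nth_mem ys(3) by blast
  qed
  show "strict_mono_on V (\<lambda>v. ys ! rank v)"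
  proof (rule strict_mono_onI)
    fix v v' assume "v \<in> V" "v' \<in> V" "v < v'"
    then have "rank v < rank v'" "rank v' < length ys"
      using rank_mono rank_less ys(1) by simp_all
    then show "ys ! rank v < ys ! rank v'" using sorted_wrt_nth_less ys(2) by blast
  qed
qed

lemma finite_signed_dom: "finite (signed_dom n)"
proof (rule finite_subset)
  show "signed_dom n \<subseteq> {- int n..int n}" unfolding signed_dom_def by auto
qed simp

lemma uminus_in_signed_dom_iff [simp]: "- i \<in> signed_dom n \<longleftrightarrow> i \<in> signed_dom n"
  unfolding signed_dom_def by simp

lemma signed_dom_iff_abs: "i \<in> signed_dom n \<longleftrightarrow> \<bar>i\<bar> \<in> {1..int n}"
  unfolding signed_dom_def by simp

lemma image_disjoint_uminus_if_abs_inj: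
  fixes h :: "'a \<Rightarrow> 'b::linordered_idom"
  assumes "inj_on (\<lambda>x. \<bar>h x\<bar>) A" and "\<And>x. x \<in> A \<Longrightarrow> h x \<noteq> 0"
  shows "h ` A \<inter> uminus ` h ` A = {}"
proof (rule ccontr)
  assume "h ` A \<inter> uminus ` h ` A \<noteq> {}"
  then obtain x y where xy: "x \<in> A" "y \<in> A" and eq: "h x = - h y" by blast
  then have "x = y" using inj_onD[OF assms(1)] by simp
  with eq have "h x = 0" by simp
  with assms(2) xy show False by blast
qed

lemma abs_inj_if_image_disjoint_uminus:
  fixes h :: "'a \<Rightarrow> 'b::linordered_idom"
  assumes "inj_on h A" and "h ` A \<inter> uminus ` h ` A = {}"
  shows "inj_on (\<lambda>x. \<bar>h x\<bar>) A"
proof (rule inj_onI)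
  fix x y assume xy: "x \<in> A" "y \<in> A" and "\<bar>h x\<bar> = \<bar>h y\<bar>"
  then consider "h x = h y" | "h x = - h y" by linarith
  then show "x = y"
  proof cases
    case 1
    show ?thesis using inj_onD[OF assms(1) 1 xy] .
  next
    case 2
    have "h x \<in> h ` A" using xy(1) by (rule imageI)
    moreover have "h x \<in> uminus ` h ` A" unfolding 2 using xy(2) by (intro imageI)
    ultimately show ?thesis using assms(2) by blast
  qed
qed

lemma signed_perms_in_signed_dom:
  "\<sigma> \<in> signed_perms n \<Longrightarrow> i \<in> signed_dom n \<Longrightarrow> \<sigma> i \<in> signed_dom n"
  unfolding signed_perms_def by (auto dest: bij_betwE)

lemma signed_perms_abs_inj:
  assumes "\<sigma> \<in> signed_perms n"
  shows "inj_on (\<lambda>i. \<bar>\<sigma> i\<bar>) {1..int n}"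
proof (rule inj_onI)
  fix i j assume ij: "i \<in> {1..int n}" "j \<in> {1..int n}" and abs_eq: "\<bar>\<sigma> i\<bar> = \<bar>\<sigma> j\<bar>"
  have inj: "inj_on \<sigma> (signed_dom n)" and odd: "\<sigma> (- j) = - \<sigma> j"
    using assms ij unfolding signed_perms_def signed_dom_def by (auto simp: bij_betw_def)
  have "i \<in> signed_dom n" "j \<in> signed_dom n" "- j \<in> signed_dom n"
    using ij unfolding signed_dom_def by auto
  moreover have "\<sigma> i = \<sigma> j \<or> \<sigma> i = \<sigma> (- j)" using abs_eq odd by linarith
  ultimately have "i = j \<or> i = - j" using inj by (auto dest: inj_onD)
  then show "i = j" using ij by auto
qed

lemma signed_perms_image_disjoint_uminus:
  assumes "\<sigma> \<in> signed_perms n"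
  shows "\<sigma> ` {1..int n} \<inter> uminus ` \<sigma> ` {1..int n} = {}"
  using signed_perms_abs_inj[OF assms]
proof (rule image_disjoint_uminus_if_abs_inj)
  fix i assume "i \<in> {1..int n}"
  then have "\<sigma> i \<in> signed_dom n"
    using signed_perms_in_signed_dom[OF assms] by (simp add: signed_dom_def)
  then show "\<sigma> i \<noteq> 0" unfolding signed_dom_def by auto
qed

definition signed_extension :: "nat \<Rightarrow> (int \<Rightarrow> int) \<Rightarrow> int \<Rightarrow> int" where
  "signed_extension n g i = (if i \<in> signed_dom n then sgn i * g \<bar>i\<bar> else i)"

lemma signed_extension_pos:
  "i \<in> {1..int n} \<Longrightarrow> signed_extension n g i = g i"
  unfolding signed_extension_def signed_dom_def by simp

lemma signed_extension_in_signed_perms: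
  assumes into: "g ` {1..int n} \<subseteq> signed_dom n"
    and abs_inj: "inj_on (\<lambda>i. \<bar>g i\<bar>) {1..int n}"
  shows "signed_extension n g \<in> signed_perms n"
proof -
  let ?\<rho> = "signed_extension n g"
  have g_abs: "g \<bar>i\<bar> \<in> signed_dom n" if "i \<in> signed_dom n" for i
  proof -
    have "\<bar>i\<bar> \<in> {1..int n}" using that signed_dom_iff_abs by blast
    then show ?thesis using into by blast
  qed
  have abs_\<rho>: "\<bar>?\<rho> i\<bar> = \<bar>g \<bar>i\<bar>\<bar>" and \<rho>_nonzero: "?\<rho> i \<noteq> 0"
    if "i \<in> signed_dom n" for i
    using that g_abs[OF that] by (auto simp: signed_extension_def abs_mult sgn_0_0 signed_dom_def)
  have odd: "?\<rho> (- i) = - ?\<rho> i" if "i \<in> signed_dom n" for i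
    using that by (simp add: signed_extension_def)
  have into_dom: "?\<rho> ` signed_dom n \<subseteq> signed_dom n"
  proof (rule image_subsetI)
    fix i assume "i \<in> signed_dom n"
    then show "?\<rho> i \<in> signed_dom n"
      using abs_\<rho> g_abs signed_dom_iff_abs by metis
  qed
  have inj: "inj_on ?\<rho> (signed_dom n)"
  proof (rule inj_onI)
    fix i j assume ij: "i \<in> signed_dom n" "j \<in> signed_dom n" and eq: "?\<rho> i = ?\<rho> j"
    then have "\<bar>i\<bar> = \<bar>j\<bar>"
      using abs_\<rho> abs_inj by (metis inj_onD signed_dom_iff_abs)
    then consider "i = j" | "i = - j" by linarith
    then show "i = j"
    proof cases
      case 2
      then have "?\<rho> j = 0" using eq odd[OF ij(2)] by simp
      with \<rho>_nonzero ij show ?thesis by blast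
    qed
  qed
  have "bij_betw ?\<rho> (signed_dom n) (signed_dom n)"
    using endo_inj_surj[OF finite_signed_dom into_dom inj] inj by (simp add: bij_betw_def)
  then show ?thesis
    unfolding signed_perms_def using odd by (simp add: signed_extension_def)
qed

lemma peak_set_cong_relative_order:
  assumes "\<And>i j. i \<in> {1..int n} \<Longrightarrow> j \<in> {1..int n} \<Longrightarrow> \<rho> i < \<rho> j \<longleftrightarrow> \<sigma> i < \<sigma> j"
  shows "peak_set n \<rho> = peak_set n \<sigma>"
  unfolding peak_set_def
proof (rule Collect_cong)
  fix i :: nat
  show "(2 \<le> i \<and> i \<le> n - 1 \<and> \<rho> (int i - 1) < \<rho> (int i) \<and> \<rho> (int i + 1) < \<rho> (int i)) \<longleftrightarrow>
        (2 \<le> i \<and> i \<le> n - 1 \<and> \<sigma> (int i - 1) < \<sigma> (int i) \<and> \<sigma> (int i + 1) < \<sigma> (int i))"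
    using assms[of "int i - 1" "int i"] assms[of "int i + 1" "int i"] by auto
qed

lemma ex_same_peaks_differing_everywhere:
  assumes \<sigma>: "\<sigma> \<in> signed_perms n"
  obtains \<rho> where "\<rho> \<in> signed_perms n" "peak_set n \<rho> = peak_set n \<sigma>"
    "\<And>i. i \<in> {1..int n} \<Longrightarrow> \<sigma> i \<noteq> \<rho> i"
proof -
  define V where "V = \<sigma> ` {1..int n}"
  have \<sigma>_V: "\<sigma> i \<in> V" if "i \<in> {1..int n}" for i
    using that unfolding V_def by blast
  have V_dom: "V \<subseteq> signed_dom n"
    unfolding V_def using signed_perms_in_signed_dom[OF \<sigma>] by (auto simp: signed_dom_def)
  have V_disjoint: "V \<inter> uminus ` V = {}"
    unfolding V_def by (rule signed_perms_image_disjoint_uminus[OF \<sigma>])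
  have "finite V" unfolding V_def by simp
  moreover have "card V = card (uminus ` V)" by (simp add: card_image)
  ultimately obtain f where f_into: "f ` V \<subseteq> uminus ` V" and f_mono: "strict_mono_on V f"
    using ex_strict_mono_on_into[OF _ finite_imageI] by blast
  define g where "g = f \<circ> \<sigma>"
  have g_into: "g ` {1..int n} \<subseteq> uminus ` V"
    using f_into unfolding g_def V_def by (simp add: image_comp)
  moreover have "uminus ` V \<subseteq> signed_dom n" using V_dom by auto
  ultimately have g_dom: "g ` {1..int n} \<subseteq> signed_dom n" by (rule subset_trans)
  have "inj_on \<sigma> {1..int n}"
    using inj_on_imageI2[of abs \<sigma>] signed_perms_abs_inj[OF \<sigma>] by (simp add: comp_def)
  moreover have "inj_on f (\<sigma> ` {1..int n})"
    using strict_mono_on_imp_inj_on[OF f_mono] unfolding V_def .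
  ultimately have "inj_on g {1..int n}" unfolding g_def by (rule comp_inj_on)
  moreover have "g ` {1..int n} \<inter> uminus ` g ` {1..int n} = {}"
  proof -
    have "uminus ` g ` {1..int n} \<subseteq> V"
      using image_mono[OF g_into, of uminus] by (simp add: image_image)
    with g_into V_disjoint show ?thesis by blast
  qed
  ultimately have g_abs_inj: "inj_on (\<lambda>i. \<bar>g i\<bar>) {1..int n}"
    by (rule abs_inj_if_image_disjoint_uminus)
  have \<rho>_pos: "signed_extension n g i = f (\<sigma> i)" if "i \<in> {1..int n}" for i
    using signed_extension_pos[OF that] unfolding g_def by simp
  show ?thesis
  proof
    show "signed_extension n g \<in> signed_perms n"
      using signed_extension_in_signed_perms[OF g_dom g_abs_inj] .
    show "peak_set n (signed_extension n g) = peak_set n \<sigma>"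
      by (rule peak_set_cong_relative_order)
        (simp add: \<rho>_pos strict_mono_on_less[OF f_mono \<sigma>_V \<sigma>_V])
    show "\<sigma> i \<noteq> signed_extension n g i" if i: "i \<in> {1..int n}" for i
    proof
      assume "\<sigma> i = signed_extension n g i"
      then have "\<sigma> i \<in> V \<inter> uminus ` V"
        using f_into \<sigma>_V[OF i] \<rho>_pos[OF i] by auto
      with V_disjoint show False by simp
    qed
  qed
qed

lemma hamming_le: "hamming n \<sigma> \<rho> \<le> n"
proof -
  have "hamming n \<sigma> \<rho> \<le> card {1..n}"
    unfolding hamming_def by (rule card_mono) auto
  then show ?thesis by simp
qed

lemma hamming_eq_if_differ_everywhere:
  assumes "\<And>i. i \<in> {1..int n} \<Longrightarrow> \<sigma> i \<noteq> \<rho> i"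
  shows "hamming n \<sigma> \<rho> = n"
proof -
  have "{i \<in> {1..n}. \<sigma> (int i) \<noteq> \<rho> (int i)} = {1..n}" using assms by auto
  then show ?thesis unfolding hamming_def by simp
qed

theorem theorem4p8:
  fixes n :: nat and S :: "nat set"
  assumes "n \<ge> 2" and "admissible_peak_set S n"
  shows "Max {hamming n \<sigma> \<rho> | \<sigma> \<rho>. \<sigma> \<in> PB S n \<and> \<rho> \<in> PB S n} = n"
proof -
  obtain \<sigma> where \<sigma>: "\<sigma> \<in> signed_perms n" "peak_set n \<sigma> = S"
    using assms(2) unfolding admissible_peak_set_def PB_def by auto
  obtain \<rho> where \<rho>: "\<rho> \<in> signed_perms n" "peak_set n \<rho> = peak_set n \<sigma>"
    and differ: "\<And>i. i \<in> {1..int n} \<Longrightarrow> \<sigma> i \<noteq> \<rho> i"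
    using ex_same_peaks_differing_everywhere[OF \<sigma>(1)] by blast
  define M where "M = {hamming n \<sigma> \<rho> | \<sigma> \<rho>. \<sigma> \<in> PB S n \<and> \<rho> \<in> PB S n}"
  have "\<sigma> \<in> PB S n" "\<rho> \<in> PB S n" using \<sigma> \<rho> unfolding PB_def by simp_all
  with hamming_eq_if_differ_everywhere[OF differ] have "n \<in> M" unfolding M_def by force
  moreover have "M \<subseteq> {..n}" unfolding M_def using hamming_le by auto
  moreover have "finite M" using finite_subset[OF calculation(2)] by simp
  ultimately have "Max M = n" by (intro Max_eqI) auto
  then show ?thesis unfolding M_def .
qed

end
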